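(* Let $n\ge 2$ and let $G\subset\mathbb{R}^n$ be a bounded domain with smooth boundary $\Gamma$. Let $p\in\mathbb{R}$ satisfy $n>p\geq \frac{n}{2}>1$ if $n>2$ (respectively $n>p>1$ if $n=2$). Let $V\in L^p(G)$ be scalar-valued. Let $k_1=\|T\|_{[L^p(G),W^1_p(G)]}$ be the operator norm of the Teodorescu transform $T$ from $L^p(G)$ to $W^1_p(G)$, let $C$ be the embedding constant of $W^1_p(G)\hookrightarrow L^{2p}(G)$, and set $k_2=k_1C^2$. Let $\underline{a}_0\in W^1_p(G)$ be vector-valued and define recursively $$\underline{a}_m:=T\big(V+|\underline{a}_{m-1}|^2\big),\quad m=1,2,\ldots$$ Assume $\|V\|_{L^p}\leq \frac{1}{4k_1k_2}$ and put $$W=\sqrt{\frac{1}{4k_2^2}-\frac{k_1}{k_2}\|V\|_{L^p}}.$$ If for some index $m_0$ $$\frac{1}{2k_2}-W\leq \|\underline{a}_{m_0}\|_{W^1_p}\leq \frac{1}{2k_2}+W,$$ then $\|\underline{a}_{m_0+1}\|_{W^1_p}\leq \|\underline{a}_{m_0}\|_{W^1_p}$, and the sequence $\{\underline{a}_m\}_{m\geq m_0}$ is bounded in $W^1_p(G)$ by $\|\underline{a}_{m_0}\|_{W^1_p}$.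
   Context: $\mathcal{C}\ell_{0,n}$ denotes the real Clifford algebra generated by an orthonormal basis $e_1,\dots,e_n$ of $\mathbb{R}^n$ with $e_ie_j+e_je_i=-2\delta_{ij}$; a vector-valued function is $\underline{a}(x)=\sum_{i=1}^n a_i(x)e_i$ with real $a_i$, and $|\underline{a}|^2=\sum_i a_i^2$. Function spaces of $\mathcal{C}\ell_{0,n}$-valued functions $f=\sum_A f_Ae_A$ are defined componentwise, with norm $\|f\|_B=\big(\sum_A\|f_A\|_B^2\big)^{1/2}$. The Teodorescu transform is $Tf(x)=\frac{1}{\omega_n}\int_G\frac{x-y}{|x-y|^n}f(y)\,dy$ (with $x-y$ viewed as a Clifford vector and $\omega_n$ the surface area of the unit sphere in $\mathbb{R}^n$); it is a right inverse of the Dirac operator $D=\sum_{j=1}^n e_j\partial_{x_j}$, and maps scalar-valued functions to vector-valued ones. *)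

theory Defs
  imports "HOL-Analysis.Analysis"
begin

definition partial_deriv :: "'n::finite \<Rightarrow> (real^'n \<Rightarrow> real) \<Rightarrow> real^'n \<Rightarrow> real" where
  "partial_deriv j f x = frechet_derivative f (at x) (axis j 1)"

fun Ck_on :: "nat \<Rightarrow> (real^'n::finite) set \<Rightarrow> (real^'n \<Rightarrow> real) \<Rightarrow> bool" where
  "Ck_on 0 U f = continuous_on U f"
| "Ck_on (Suc k) U f =
     ((\<forall>x\<in>U. f differentiable (at x)) \<and> (\<forall>j. Ck_on k U (partial_deriv j f)))"

definition smooth_on :: "(real^'n::finite) set \<Rightarrow> (real^'n \<Rightarrow> real) \<Rightarrow> bool" where
  "smooth_on U f = (\<forall>k. Ck_on k U f)"

definition smooth_bounded_domain :: "(real^'n::finite) set \<Rightarrow> bool" where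
  "smooth_bounded_domain G =
     (open G \<and> connected G \<and> bounded G \<and> G \<noteq> {} \<and>
      (\<forall>z\<in>frontier G. \<exists>U \<rho>. open U \<and> z \<in> U \<and> smooth_on U \<rho> \<and>
          (\<forall>x\<in>U. \<exists>v. frechet_derivative \<rho> (at x) v \<noteq> 0) \<and>
          G \<inter> U = {x\<in>U. \<rho> x < 0}))"

definition in_Lp :: "real \<Rightarrow> (real^'n::finite) set \<Rightarrow> (real^'n \<Rightarrow> real) \<Rightarrow> bool" where
  "in_Lp p G u =
     ((\<lambda>x. indicator G x * u x) \<in> borel_measurable lebesgue \<and>
      set_integrable lebesgue G (\<lambda>x. \<bar>u x\<bar> powr p))"

definition Lp_norm :: "real \<Rightarrow> (real^'n::finite) set \<Rightarrow> (real^'n \<Rightarrow> real) \<Rightarrow> real" where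
  "Lp_norm p G u = (LINT x:G|lebesgue. \<bar>u x\<bar> powr p) powr (1 / p)"

definition test_fun :: "(real^'n::finite) set \<Rightarrow> (real^'n \<Rightarrow> real) \<Rightarrow> bool" where
  "test_fun G \<phi> = (smooth_on UNIV \<phi> \<and> compact (closure {x. \<phi> x \<noteq> 0})
                     \<and> closure {x. \<phi> x \<noteq> 0} \<subseteq> G)"

definition weak_partial :: "(real^'n::finite) set \<Rightarrow> 'n \<Rightarrow> (real^'n \<Rightarrow> real) \<Rightarrow> (real^'n \<Rightarrow> real) \<Rightarrow> bool" where
  "weak_partial G j u g =
     (\<forall>\<phi>. test_fun G \<phi> \<longrightarrow>
        (LINT x:G|lebesgue. u x * partial_deriv j \<phi> x) = - (LINT x:G|lebesgue. g x * \<phi> x))"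

definition in_W1p :: "real \<Rightarrow> (real^'n::finite) set \<Rightarrow> (real^'n \<Rightarrow> real) \<Rightarrow> bool" where
  "in_W1p p G u = (in_Lp p G u \<and> (\<forall>j. \<exists>g. in_Lp p G g \<and> weak_partial G j u g))"

definition W1p_norm :: "real \<Rightarrow> (real^'n::finite) set \<Rightarrow> (real^'n \<Rightarrow> real) \<Rightarrow> real" where
  "W1p_norm p G u =
     (Lp_norm p G u powr p +
      (\<Sum>j\<in>UNIV. Lp_norm p G (SOME g. in_Lp p G g \<and> weak_partial G j u g) powr p)) powr (1 / p)"

text \<open>An element of Cl_{0,n} is represented by its coefficients (f_A) indexed by
  subsets A of the (ordered, finite) index type; e_A = e_{a1}...e_{ak}, a1<...<ak.\<close>
type_synonym 'n cl = "'n set \<Rightarrow> real"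

definition symd :: "'a set \<Rightarrow> 'a set \<Rightarrow> 'a set" where
  "symd A B = (A - B) \<union> (B - A)"

text \<open>e_i e_A = cl_sign i A * e_{{i} symd A}\<close>
definition cl_sign :: "'n::linorder \<Rightarrow> 'n set \<Rightarrow> real" where
  "cl_sign i A = (-1) ^ card {a\<in>A. a < i} * (if i \<in> A then -1 else 1)"

text \<open>Clifford product of the vector sum_i v_i e_i with a Clifford number a.\<close>
definition cl_vmult :: "real^'n::{finite,linorder} \<Rightarrow> 'n cl \<Rightarrow> 'n cl" where
  "cl_vmult v a = (\<lambda>C. \<Sum>i\<in>UNIV. v $ i * cl_sign i (symd {i} C) * a (symd {i} C))"

definition cl_scalar :: "real \<Rightarrow> 'n cl" where
  "cl_scalar s = (\<lambda>A. if A = {} then s else 0)"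

definition vec_abs2 :: "('n::finite) cl \<Rightarrow> real" where
  "vec_abs2 a = (\<Sum>i\<in>UNIV. (a {i})\<^sup>2)"

definition vector_valued_on :: "(real^'n::finite) set \<Rightarrow> (real^'n \<Rightarrow> 'n cl) \<Rightarrow> bool" where
  "vector_valued_on G f = (\<forall>x\<in>G. \<forall>A. card A \<noteq> 1 \<longrightarrow> f x A = 0)"

definition cl_Lp :: "real \<Rightarrow> (real^'n::finite) set \<Rightarrow> (real^'n \<Rightarrow> 'n cl) \<Rightarrow> bool" where
  "cl_Lp p G f = (\<forall>A. in_Lp p G (\<lambda>x. f x A))"

definition cl_Lp_norm :: "real \<Rightarrow> (real^'n::finite) set \<Rightarrow> (real^'n \<Rightarrow> 'n cl) \<Rightarrow> real" where
  "cl_Lp_norm p G f = sqrt (\<Sum>A\<in>UNIV. (Lp_norm p G (\<lambda>x. f x A))\<^sup>2)"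

definition cl_W1p :: "real \<Rightarrow> (real^'n::finite) set \<Rightarrow> (real^'n \<Rightarrow> 'n cl) \<Rightarrow> bool" where
  "cl_W1p p G f = (\<forall>A. in_W1p p G (\<lambda>x. f x A))"

definition cl_W1p_norm :: "real \<Rightarrow> (real^'n::finite) set \<Rightarrow> (real^'n \<Rightarrow> 'n cl) \<Rightarrow> real" where
  "cl_W1p_norm p G f = sqrt (\<Sum>A\<in>UNIV. (W1p_norm p G (\<lambda>x. f x A))\<^sup>2)"

text \<open>omega_n = surface area of the unit sphere in R^n = n * vol(unit ball).\<close>
definition omega :: "nat \<Rightarrow> real" where
  "omega n = real n * unit_ball_vol (real n)"

definition teodorescu :: "(real^'n::{finite,linorder}) set \<Rightarrow> (real^('n::{finite,linorder}) \<Rightarrow> 'n cl) \<Rightarrow> real^('n::{finite,linorder}) \<Rightarrow> 'n cl" where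
  "teodorescu G f x = (\<lambda>C. (1 / omega CARD('n)) *
      (LINT y:G|lebesgue. cl_vmult ((1 / norm (x - y) ^ CARD('n)) *\<^sub>R (x - y)) (f y) C))"

definition teo_bounded :: "real \<Rightarrow> (real^'n::{finite,linorder}) set \<Rightarrow> bool" where
  "teo_bounded p G =
     ((\<forall>f. cl_Lp p G f \<longrightarrow> cl_W1p p G (teodorescu G f)) \<and>
      bdd_above {cl_W1p_norm p G (teodorescu G f) / cl_Lp_norm p G f | f.
                   cl_Lp p G f \<and> cl_Lp_norm p G f \<noteq> 0})"

definition teo_opnorm :: "real \<Rightarrow> (real^'n::{finite,linorder}) set \<Rightarrow> real" where
  "teo_opnorm p G =
     Sup {cl_W1p_norm p G (teodorescu G f) / cl_Lp_norm p G f | f.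
            cl_Lp p G f \<and> cl_Lp_norm p G f \<noteq> 0}"

definition embed_bounded :: "real \<Rightarrow> (real^'n::finite) set \<Rightarrow> bool" where
  "embed_bounded p G =
     ((\<forall>u. cl_W1p p G u \<longrightarrow> cl_Lp (2 * p) G u) \<and>
      bdd_above {cl_Lp_norm (2 * p) G u / cl_W1p_norm p G u | u.
                   cl_W1p p G u \<and> cl_W1p_norm p G u \<noteq> 0})"

definition embed_const :: "real \<Rightarrow> (real^'n::finite) set \<Rightarrow> real" where
  "embed_const p G =
     Sup {cl_Lp_norm (2 * p) G u / cl_W1p_norm p G u | u.
            cl_W1p p G u \<and> cl_W1p_norm p G u \<noteq> 0}"

end

theory Submission
  imports Defs
begin

text \<open>Boundedness of the Teodorescu transform and of the embedding of W^1_p into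
  L_2p, together with Minkowski's inequality in L_p and the bound
  \<parallel>|a|^2\<parallel>_p \<le> C^2 \<parallel>a\<parallel>^2, give the recursive estimate
  \<parallel>a_(m+1)\<parallel> \<le> k1 \<parallel>V\<parallel> + k2 \<parallel>a_m\<parallel>^2.
  The hypothesis on \<parallel>a_m0\<parallel> says that it lies between the two roots of
  k2 t^2 - t + k1 \<parallel>V\<parallel>, so the interval [0, \<parallel>a_m0\<parallel>] is invariant under
  t \<mapsto> k1 \<parallel>V\<parallel> + k2 t^2.\<close>

lemma convex_on_powr_nonneg:
  assumes p: "p \<ge> 1"
  shows "convex_on {0::real..} (\<lambda>x. x powr p)"
proof
  have powr_le_self: "s powr p \<le> s" if "0 \<le> s" "s \<le> 1" for s :: real
    using that p powr_mono'[of 1 p s] by (cases "s = 0") auto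
  fix t x y :: real
  assume t: "0 < t" "t < 1" and xy: "x \<in> {0..}" "y \<in> {0..}"
  consider "x = 0" | "y = 0" | "x > 0" "y > 0" using xy by force
  then show "((1 - t) *\<^sub>R x + t *\<^sub>R y) powr p \<le> (1 - t) * x powr p + t * y powr p"
  proof cases
    case 1
    then have "((1 - t) *\<^sub>R x + t *\<^sub>R y) powr p = t powr p * y powr p"
      using t xy by (simp add: powr_mult)
    also have "\<dots> \<le> t * y powr p"
      using t powr_le_self[of t] by (intro mult_right_mono) auto
    finally show ?thesis using 1 p by simp
  next
    case 2
    then have "((1 - t) *\<^sub>R x + t *\<^sub>R y) powr p = (1 - t) powr p * x powr p"
      using t xy by (simp add: powr_mult)
    also have "\<dots> \<le> (1 - t) * x powr p"
      using t powr_le_self[of "1 - t"] by (intro mult_right_mono) auto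
    finally show ?thesis using 2 p by simp
  next
    case 3
    then show ?thesis using convex_onD[OF powr_convex[OF p], of t x y] t by auto
  qed
qed simp

lemma abs_add_powr_le:
  fixes s t A B p :: real
  assumes p: "p \<ge> 1" and A: "A > 0" and B: "B > 0"
  shows "\<bar>s + t\<bar> powr p
    \<le> (A + B) powr (p - 1) * (A powr (1 - p) * \<bar>s\<bar> powr p + B powr (1 - p) * \<bar>t\<bar> powr p)"
proof -
  define l where "l = B / (A + B)"
  have l: "0 \<le> l" "l \<le> 1" "1 - l = A / (A + B)" using A B by (auto simp: l_def field_simps)
  have "(A + B) * ((1 - l) * (\<bar>s\<bar> / A) + l * (\<bar>t\<bar> / B)) = \<bar>s\<bar> + \<bar>t\<bar>"
    using A B unfolding l(3) by (simp add: l_def divide_simps)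
  then have "\<bar>s + t\<bar> \<le> (A + B) * ((1 - l) * (\<bar>s\<bar> / A) + l * (\<bar>t\<bar> / B))"
    by (simp add: abs_triangle_ineq)
  then have "\<bar>s + t\<bar> powr p \<le> ((A + B) * ((1 - l) * (\<bar>s\<bar> / A) + l * (\<bar>t\<bar> / B))) powr p"
    using p by (intro powr_mono2) auto
  also have "\<dots> = (A + B) powr p * ((1 - l) * (\<bar>s\<bar> / A) + l * (\<bar>t\<bar> / B)) powr p"
    using A B l by (simp add: powr_mult)
  also have "\<dots> \<le> (A + B) powr p * ((1 - l) * (\<bar>s\<bar> / A) powr p + l * (\<bar>t\<bar> / B) powr p)"
    using convex_onD[OF convex_on_powr_nonneg[OF p], of l "\<bar>s\<bar> / A" "\<bar>t\<bar> / B"] A B l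
    by (intro mult_left_mono) auto
  also have "\<dots> = (A + B) powr (p - 1) * (A powr (1 - p) * \<bar>s\<bar> powr p + B powr (1 - p) * \<bar>t\<bar> powr p)"
  proof -
    have "c * (A / (A + B) * (S / a) + B / (A + B) * (T / b)) = c / (A + B) * (A / a * S + B / b * T)"
      for c S T a b :: real
      by (simp add: algebra_simps)
    then show ?thesis using A B unfolding l(3) unfolding l_def by (simp add: powr_diff powr_divide)
  qed
  finally show ?thesis .
qed

section \<open>L_p norms on G\<close>

lemma Lp_norm_nonneg: "0 \<le> Lp_norm p G u"
  unfolding Lp_norm_def by (rule powr_ge_zero)

lemma set_integral_abs_powr_nonneg:
  fixes u :: "real^'n::finite \<Rightarrow> real"
  shows "0 \<le> (LINT x:G|lebesgue. \<bar>u x\<bar> powr p)"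
  unfolding set_lebesgue_integral_def by (intro integral_nonneg_AE AE_I2) (simp add: indicator_def)

lemma Lp_norm_powr:
  assumes "p > 0"
  shows "Lp_norm p G u powr p = (LINT x:G|lebesgue. \<bar>u x\<bar> powr p)"
  using assms set_integral_abs_powr_nonneg[of G u p] by (simp add: Lp_norm_def powr_powr)

lemma in_Lp_integrable:
  "in_Lp p G u \<Longrightarrow> integrable lebesgue (\<lambda>x. indicator G x *\<^sub>R \<bar>u x\<bar> powr p)"
  by (simp add: in_Lp_def set_integrable_def)

lemma Lp_norm_eq_0_imp_AE:
  assumes u: "in_Lp p G u" and p: "p > 0" and z: "Lp_norm p G u = 0"
  shows "AE x in lebesgue. x \<in> G \<longrightarrow> u x = 0"
proof -
  have "integral\<^sup>L lebesgue (\<lambda>x. indicator G x *\<^sub>R \<bar>u x\<bar> powr p) = 0"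
    using z p by (simp add: Lp_norm_def set_lebesgue_integral_def)
  then have "AE x in lebesgue. indicator G x *\<^sub>R \<bar>u x\<bar> powr p = 0"
    using integral_nonneg_eq_0_iff_AE[OF in_Lp_integrable[OF u]] by (simp add: indicator_def)
  then show ?thesis
    by eventually_elim (auto simp: indicator_def split: if_splits)
qed

lemma Lp_norm_cong_AE:
  assumes "in_Lp p G u" "in_Lp p G v" and "AE x in lebesgue. x \<in> G \<longrightarrow> u x = v x"
  shows "Lp_norm p G u = Lp_norm p G v"
proof -
  have "AE x in lebesgue. indicator G x *\<^sub>R \<bar>u x\<bar> powr p = indicator G x *\<^sub>R \<bar>v x\<bar> powr p"
    using assms(3) by eventually_elim (auto simp: indicator_def)
  then have "(LINT x:G|lebesgue. \<bar>u x\<bar> powr p) = (LINT x:G|lebesgue. \<bar>v x\<bar> powr p)"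
    unfolding set_lebesgue_integral_def
    using assms(1,2)[THEN in_Lp_integrable] by (intro integral_cong_AE) auto
  then show ?thesis by (simp add: Lp_norm_def)
qed

lemma in_Lp_zero: "in_Lp p G (\<lambda>x. 0)"
  by (simp add: in_Lp_def set_integrable_def)

lemma Lp_norm_zero: "Lp_norm p G (\<lambda>x. 0) = 0"
  by (simp add: Lp_norm_def set_lebesgue_integral_def)

lemma in_Lp_add:
  assumes p: "p \<ge> 1" and u: "in_Lp p G u" and v: "in_Lp p G v"
  shows "in_Lp p G (\<lambda>x. u x + v x)"
proof -
  have "(\<lambda>x. indicator G x * (u x + v x)) = (\<lambda>x. indicator G x * u x + indicator G x * v x)"
    by (simp add: algebra_simps)
  then have m: "(\<lambda>x. indicator G x * (u x + v x)) \<in> borel_measurable lebesgue"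
    using u v by (simp add: in_Lp_def borel_measurable_add)
  have "(\<lambda>x. indicator G x *\<^sub>R \<bar>u x + v x\<bar> powr p) = (\<lambda>x. \<bar>indicator G x * (u x + v x)\<bar> powr p)"
    using p by (auto simp: indicator_def)
  moreover have "(\<lambda>x. \<bar>indicator G x * (u x + v x)\<bar> powr p) \<in> borel_measurable lebesgue"
    using m by measurable
  ultimately have "(\<lambda>x. indicator G x *\<^sub>R \<bar>u x + v x\<bar> powr p) \<in> borel_measurable lebesgue"
    by simp
  then have "integrable lebesgue (\<lambda>x. indicator G x *\<^sub>R \<bar>u x + v x\<bar> powr p)"
  proof (rule Bochner_Integration.integrable_bound[rotated])
    show "integrable lebesgue (\<lambda>x. 2 powr (p - 1)
        * (indicator G x *\<^sub>R \<bar>u x\<bar> powr p + indicator G x *\<^sub>R \<bar>v x\<bar> powr p))"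
      using u[THEN in_Lp_integrable] v[THEN in_Lp_integrable] by simp
    have "\<bar>s + t\<bar> powr p \<le> 2 powr (p - 1) * (\<bar>s\<bar> powr p + \<bar>t\<bar> powr p)" for s t :: real
      using abs_add_powr_le[OF p, of 1 1 s t] by simp
    then show "AE x in lebesgue. norm (indicator G x *\<^sub>R \<bar>u x + v x\<bar> powr p)
        \<le> norm (2 powr (p - 1) * (indicator G x *\<^sub>R \<bar>u x\<bar> powr p + indicator G x *\<^sub>R \<bar>v x\<bar> powr p))"
      by (intro AE_I2) (simp add: indicator_def)
  qed
  then show ?thesis using m by (simp add: in_Lp_def set_integrable_def)
qed

lemma Lp_norm_add_null:
  assumes p: "p \<ge> 1" and u: "in_Lp p G u" and v: "in_Lp p G v" and z: "Lp_norm p G u = 0"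
  shows "Lp_norm p G (\<lambda>x. u x + v x) = Lp_norm p G v"
proof (rule Lp_norm_cong_AE[OF in_Lp_add[OF p u v] v])
  show "AE x in lebesgue. x \<in> G \<longrightarrow> u x + v x = v x"
    using Lp_norm_eq_0_imp_AE[OF u _ z] p by (auto elim: AE_mp)
qed

lemma Lp_norm_add_le:
  assumes p: "p \<ge> 1" and u: "in_Lp p G u" and v: "in_Lp p G v"
  shows "Lp_norm p G (\<lambda>x. u x + v x) \<le> Lp_norm p G u + Lp_norm p G v"
proof (cases "Lp_norm p G u = 0 \<or> Lp_norm p G v = 0")
  case True
  then show ?thesis
    using Lp_norm_add_null[OF p u v] Lp_norm_add_null[OF p v u] Lp_norm_nonneg[of p G]
    by (auto simp: add.commute)
next
  case False
  define A B where "A = Lp_norm p G u" and "B = Lp_norm p G v"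
  then have A: "A > 0" and B: "B > 0"
    using False Lp_norm_nonneg[of p G] by (auto simp: order.order_iff_strict)
  have IA: "(LINT x:G|lebesgue. \<bar>u x\<bar> powr p) = A powr p"
    and IB: "(LINT x:G|lebesgue. \<bar>v x\<bar> powr p) = B powr p"
    using p by (simp_all add: A_def B_def Lp_norm_powr)
  \<comment> \<open>The weights A, B are the norms themselves, which makes the bound exactly (A + B)^p.\<close>
  have "(LINT x:G|lebesgue. \<bar>u x + v x\<bar> powr p)
      \<le> (LINT x:G|lebesgue. (A + B) powr (p - 1)
            * (A powr (1 - p) * \<bar>u x\<bar> powr p + B powr (1 - p) * \<bar>v x\<bar> powr p))"
    using in_Lp_add[OF p u v] u v abs_add_powr_le[OF p A B]
    by (intro set_integral_mono) (auto simp: in_Lp_def)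
  also have "\<dots> = (A + B) powr (p - 1) * (A powr (1 - p) * A powr p + B powr (1 - p) * B powr p)"
    using u v by (simp add: in_Lp_def IA IB)
  also have "\<dots> = (A + B) powr p"
    using A B by (simp add: powr_add[symmetric] powr_diff)
  finally have "(LINT x:G|lebesgue. \<bar>u x + v x\<bar> powr p) \<le> (A + B) powr p" .
  then have "Lp_norm p G (\<lambda>x. u x + v x) \<le> ((A + B) powr p) powr (1 / p)"
    unfolding Lp_norm_def using p set_integral_abs_powr_nonneg by (intro powr_mono2) auto
  then show ?thesis using A B p by (simp add: A_def B_def powr_powr)
qed

lemma in_Lp_sum:
  assumes p: "p \<ge> 1" and "finite I" and "\<And>i. i \<in> I \<Longrightarrow> in_Lp p G (f i)"
  shows "in_Lp p G (\<lambda>x. \<Sum>i\<in>I. f i x)"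
  using assms(2,3) by (induction I rule: finite_induct) (simp_all add: in_Lp_zero in_Lp_add[OF p])

lemma Lp_norm_sum_le:
  assumes p: "p \<ge> 1" and "finite I" and "\<And>i. i \<in> I \<Longrightarrow> in_Lp p G (f i)"
  shows "Lp_norm p G (\<lambda>x. \<Sum>i\<in>I. f i x) \<le> (\<Sum>i\<in>I. Lp_norm p G (f i))"
  using assms(2,3)
proof (induction I rule: finite_induct)
  case (insert j I)
  have "Lp_norm p G (\<lambda>x. f j x + (\<Sum>i\<in>I. f i x)) \<le> Lp_norm p G (f j) + Lp_norm p G (\<lambda>x. \<Sum>i\<in>I. f i x)"
    using insert.prems by (intro Lp_norm_add_le[OF p] in_Lp_sum[OF p insert.hyps(1)]) auto
  then show ?case using insert by simp
qed (simp add: Lp_norm_zero)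

lemma power2_powr: "(t\<^sup>2) powr p = \<bar>t :: real\<bar> powr (2 * p)"
  by (cases "t = 0") (simp_all add: powr_powr[symmetric] powr_realpow)

lemma in_Lp_power2:
  fixes u :: "real^'n::finite \<Rightarrow> real"
  assumes p: "p > 0" and u: "in_Lp (2 * p) G u"
  shows "in_Lp p G (\<lambda>x. (u x)\<^sup>2)"
proof -
  have "(\<lambda>x. indicator G x * (u x)\<^sup>2) = (\<lambda>x. (indicator G x * u x)\<^sup>2)"
    by (auto simp: indicator_def)
  moreover have "(\<lambda>x. indicator G x * u x) \<in> borel_measurable lebesgue"
    using u by (simp add: in_Lp_def)
  then have "(\<lambda>x. (indicator G x * u x)\<^sup>2) \<in> borel_measurable lebesgue"
    by measurable
  ultimately show ?thesis using u by (simp add: in_Lp_def power2_powr)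
qed

lemma Lp_norm_power2:
  assumes "p > 0"
  shows "Lp_norm p G (\<lambda>x. (u x)\<^sup>2) = (Lp_norm (2 * p) G u)\<^sup>2"
proof -
  have "(x powr a)\<^sup>2 = x powr (2 * a)" for x a :: real
    by (simp add: power2_eq_square powr_add[symmetric])
  then show ?thesis using assms by (simp add: Lp_norm_def power2_powr)
qed

lemma in_Lp_const:
  fixes G :: "(real^'n::finite) set"
  assumes "open G" "bounded G"
  shows "in_Lp p G (\<lambda>x. c)"
proof -
  have "G \<in> sets lebesgue" "emeasure lebesgue G < \<infinity>"
    using assms lmeasurable_open[OF assms(2,1)] by (auto simp: fmeasurable_def)
  then show ?thesis
    by (simp add: in_Lp_def set_integrable_def integrable_indicator borel_measurable_indicator)
qed

lemma Lp_norm_const: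
  fixes G :: "(real^'n::finite) set"
  assumes "c > 0" "p > 0"
  shows "Lp_norm p G (\<lambda>x. c) = c * Lp_norm p G (\<lambda>x. 1)"
  using assms set_integral_abs_powr_nonneg[of G "\<lambda>x. 1" p]
  by (simp add: Lp_norm_def powr_mult powr_powr set_lebesgue_integral_def)

lemma Lp_norm_one_pos:
  fixes G :: "(real^'n::finite) set"
  assumes G: "open G" "bounded G" "G \<noteq> {}" and p: "p > 0"
  shows "Lp_norm p G (\<lambda>x. 1) > 0"
proof (rule ccontr)
  assume "\<not> ?thesis"
  then have "Lp_norm p G (\<lambda>x. 1) = 0" using Lp_norm_nonneg[of p G "\<lambda>x. 1"] by linarith
  then have "AE x in lebesgue. x \<in> G \<longrightarrow> x \<in> {}"
    using Lp_norm_eq_0_imp_AE[OF in_Lp_const[OF G(1,2), of p 1] p] by simp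
  then show False using mem_closed_if_AE_lebesgue_open[OF G(1), of "{}"] G(3) by auto
qed

section \<open>Clifford-valued functions\<close>

lemma abs_le_sqrt_sum_power2:
  fixes h :: "'a::finite \<Rightarrow> real"
  shows "\<bar>h A\<bar> \<le> sqrt (\<Sum>B\<in>UNIV. (h B)\<^sup>2)"
  using real_sqrt_le_mono[OF member_le_sum[of A UNIV "\<lambda>B. (h B)\<^sup>2"]] by simp

lemma sqrt_sum_power2_eq_0D:
  fixes h :: "'a::finite \<Rightarrow> real"
  shows "sqrt (\<Sum>B\<in>UNIV. (h B)\<^sup>2) = 0 \<Longrightarrow> h A = 0"
  using abs_le_sqrt_sum_power2[of h A] by simp

lemma sum_singletons_le_sum:
  fixes h :: "'a::finite set \<Rightarrow> real"
  assumes "\<And>A. h A \<ge> 0"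
  shows "(\<Sum>i\<in>UNIV. h {i}) \<le> (\<Sum>A\<in>UNIV. h A)"
proof -
  have "(\<Sum>i\<in>UNIV. h {i}) = (\<Sum>A\<in>(\<lambda>i. {i}) ` UNIV. h A)"
    by (subst sum.reindex) (auto simp: inj_on_def)
  also have "\<dots> \<le> (\<Sum>A\<in>UNIV. h A)"
    by (rule sum_mono2) (auto simp: assms)
  finally show ?thesis .
qed

lemma cl_Lp_norm_nonneg: "0 \<le> cl_Lp_norm p G f"
  by (simp add: cl_Lp_norm_def sum_nonneg)

lemma cl_W1p_norm_nonneg: "0 \<le> cl_W1p_norm p G f"
  by (simp add: cl_W1p_norm_def sum_nonneg)

lemma W1p_norm_nonneg: "0 \<le> W1p_norm p G u"
  unfolding W1p_norm_def by (rule powr_ge_zero)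

lemma W1p_norm_le_cl_W1p_norm: "W1p_norm p G (\<lambda>x. f x A) \<le> cl_W1p_norm p G f"
  using abs_le_sqrt_sum_power2[of "\<lambda>A. W1p_norm p G (\<lambda>x. f x A)" A] by (simp add: cl_W1p_norm_def)

lemma cl_Lp_scalar:
  assumes "in_Lp p G g"
  shows "cl_Lp p G (\<lambda>x. cl_scalar (g x))"
  unfolding cl_Lp_def
proof
  show "in_Lp p G (\<lambda>x. cl_scalar (g x) A)" for A
    using assms in_Lp_zero by (cases "A = {}") (simp_all add: cl_scalar_def)
qed

lemma cl_Lp_norm_scalar: "cl_Lp_norm p G (\<lambda>x. cl_scalar (g x) :: 'n::finite cl) = Lp_norm p G g"
proof -
  have "(\<Sum>A\<in>(UNIV :: 'n set set). (Lp_norm p G (\<lambda>x. cl_scalar (g x) A))\<^sup>2)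
      = (\<Sum>A\<in>(UNIV :: 'n set set). if A = {} then (Lp_norm p G g)\<^sup>2 else 0)"
    by (rule sum.cong) (simp_all add: cl_scalar_def Lp_norm_zero)
  then show ?thesis using Lp_norm_nonneg[of p G g] by (simp add: cl_Lp_norm_def)
qed

lemma teodorescu_eq_0_if_AE:
  fixes f :: "real^'n::{finite,linorder} \<Rightarrow> 'n cl"
  assumes "\<And>A. AE y in lebesgue. y \<in> G \<longrightarrow> f y A = 0"
  shows "teodorescu G f = (\<lambda>x C. 0)"
proof (intro ext)
  fix x C
  have "AE y in lebesgue. \<forall>A\<in>UNIV. y \<in> G \<longrightarrow> f y A = 0"
    by (intro AE_finite_allI) (auto simp: assms)
  then have "AE y in lebesgue.
      indicator G y *\<^sub>R cl_vmult ((1 / norm (x - y) ^ CARD('n)) *\<^sub>R (x - y)) (f y) C = 0"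
    by eventually_elim (auto simp: indicator_def cl_vmult_def)
  then show "teodorescu G f x C = 0"
    by (simp add: teodorescu_def set_lebesgue_integral_def integral_eq_zero_AE)
qed

lemma cl_vmult_scalar_scalar_part: "cl_vmult v (cl_scalar c) {} = 0"
  by (simp add: cl_vmult_def cl_scalar_def symd_def)

lemma teodorescu_scalar_scalar_part: "teodorescu G (\<lambda>x. cl_scalar (g x)) x {} = 0"
  by (simp add: teodorescu_def cl_vmult_scalar_scalar_part)

section \<open>Bounds from the operator norms\<close>

lemma le_Sup_ratio_mult:
  fixes F N :: "'a \<Rightarrow> real"
  assumes "bdd_above {F g / N g | g. P g \<and> N g \<noteq> 0}" and "P f" and "N f > 0"
  shows "F f \<le> Sup {F g / N g | g. P g \<and> N g \<noteq> 0} * N f"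
proof -
  have "F f / N f \<le> Sup {F g / N g | g. P g \<and> N g \<noteq> 0}"
    using assms by (intro cSup_upper) auto
  then show ?thesis using assms(3) by (simp add: pos_divide_le_eq)
qed

lemma teo_opnorm_bound_pos:
  assumes "teo_bounded p G" and "cl_Lp p G f" and "cl_Lp_norm p G f > 0"
  shows "cl_W1p_norm p G (teodorescu G f) \<le> teo_opnorm p G * cl_Lp_norm p G f"
  using assms unfolding teo_bounded_def teo_opnorm_def
  by (intro le_Sup_ratio_mult[where F = "\<lambda>f. cl_W1p_norm p G (teodorescu G f)"]) auto

lemma teo_opnorm_nonneg:
  fixes G :: "(real^'n::{finite,linorder}) set"
  assumes G: "open G" "bounded G" "G \<noteq> {}" and p: "p > 0" and T: "teo_bounded p G"
  shows "0 \<le> teo_opnorm p G"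
proof -
  let ?f = "\<lambda>x::real^('n::{finite,linorder}). cl_scalar 1 :: 'n cl"
  have pos: "cl_Lp_norm p G ?f > 0"
    using cl_Lp_norm_scalar[of p G "\<lambda>x. 1"] Lp_norm_one_pos[OF G p] by simp
  then have "cl_W1p_norm p G (teodorescu G ?f) \<le> teo_opnorm p G * cl_Lp_norm p G ?f"
    using T cl_Lp_scalar[OF in_Lp_const[OF G(1,2)]] by (intro teo_opnorm_bound_pos) auto
  then have "0 \<le> teo_opnorm p G * cl_Lp_norm p G ?f"
    using cl_W1p_norm_nonneg order_trans by blast
  then show ?thesis using pos by (simp add: zero_le_mult_iff)
qed

text \<open>The weak derivatives in W1p_norm are chosen by SOME, so it is not obvious that
  the zero function has norm 0. It follows from the boundedness of T: the scalar part of
  the transform of a constant c > 0 vanishes, so its norm is at most c times a constant.\<close>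
lemma W1p_norm_zero_eq_0:
  fixes G :: "(real^'n::{finite,linorder}) set"
  assumes G: "open G" "bounded G" "G \<noteq> {}" and p: "p > 0" and T: "teo_bounded p G"
  shows "W1p_norm p G (\<lambda>x. 0) = 0"
proof -
  define K where "K = teo_opnorm p G * Lp_norm p G (\<lambda>x. 1)"
  have bound: "W1p_norm p G (\<lambda>x. 0) \<le> c * K" if c: "c > 0" for c
  proof -
    let ?f = "\<lambda>x::real^('n::{finite,linorder}). cl_scalar c :: 'n cl"
    have norm_f: "cl_Lp_norm p G ?f = c * Lp_norm p G (\<lambda>x. 1)"
      using cl_Lp_norm_scalar[of p G "\<lambda>x. c"] Lp_norm_const[OF c p] by simp
    have "W1p_norm p G (\<lambda>x. 0) = W1p_norm p G (\<lambda>x. teodorescu G ?f x {})"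
      by (simp add: teodorescu_scalar_scalar_part)
    also have "\<dots> \<le> cl_W1p_norm p G (teodorescu G ?f)"
      by (rule W1p_norm_le_cl_W1p_norm)
    also have "\<dots> \<le> teo_opnorm p G * cl_Lp_norm p G ?f"
      using T cl_Lp_scalar[OF in_Lp_const[OF G(1,2)]] norm_f c Lp_norm_one_pos[OF G p]
      by (intro teo_opnorm_bound_pos) auto
    finally show ?thesis by (simp add: norm_f K_def mult_ac)
  qed
  have "W1p_norm p G (\<lambda>x. 0) \<le> 0 + e" if e: "e > 0" for e
  proof -
    have "e / (\<bar>K\<bar> + 1) * K \<le> e / (\<bar>K\<bar> + 1) * (\<bar>K\<bar> + 1)"
      using e by (intro mult_left_mono) auto
    then show ?thesis using bound[of "e / (\<bar>K\<bar> + 1)"] e by simp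
  qed
  then show ?thesis using W1p_norm_nonneg[of p G "\<lambda>x. 0"] field_le_epsilon by (metis antisym)
qed

lemma teo_opnorm_bound:
  fixes G :: "(real^'n::{finite,linorder}) set"
  assumes G: "open G" "bounded G" "G \<noteq> {}" and p: "p > 0" and T: "teo_bounded p G"
    and f: "cl_Lp p G f"
  shows "cl_W1p_norm p G (teodorescu G f) \<le> teo_opnorm p G * cl_Lp_norm p G f"
proof (cases "cl_Lp_norm p G f = 0")
  case True
  have "AE y in lebesgue. y \<in> G \<longrightarrow> f y A = 0" for A
    using True f sqrt_sum_power2_eq_0D[of "\<lambda>A. Lp_norm p G (\<lambda>x. f x A)" A]
    by (intro Lp_norm_eq_0_imp_AE[OF _ p]) (auto simp: cl_Lp_def cl_Lp_norm_def)
  then have "teodorescu G f = (\<lambda>x C. 0)" by (rule teodorescu_eq_0_if_AE)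
  then show ?thesis using True W1p_norm_zero_eq_0[OF G p T] by (simp add: cl_W1p_norm_def)
next
  case False
  then show ?thesis using teo_opnorm_bound_pos[OF T f] cl_Lp_norm_nonneg[of p G f] by simp
qed

lemma Lp_norm_eq_0_if_W1p_norm_eq_0:
  assumes p: "p > 0" and z: "W1p_norm p G u = 0"
  shows "Lp_norm p G u = 0"
proof -
  define S where "S = (\<Sum>j\<in>UNIV. Lp_norm p G (SOME g. in_Lp p G g \<and> weak_partial G j u g) powr p)"
  have "Lp_norm p G u powr p + S = 0" using z by (simp add: W1p_norm_def S_def)
  moreover have "S \<ge> 0" by (simp add: S_def sum_nonneg)
  ultimately have "Lp_norm p G u powr p = 0" using powr_ge_zero[of "Lp_norm p G u" p] by linarith
  then show ?thesis by simp
qed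

lemma embed_const_bound:
  fixes G :: "(real^'n::finite) set"
  assumes p: "p > 0" and E: "embed_bounded p G" and u: "cl_W1p p G u"
  shows "cl_Lp_norm (2 * p) G u \<le> embed_const p G * cl_W1p_norm p G u"
proof (cases "cl_W1p_norm p G u = 0")
  case True
  have "Lp_norm (2 * p) G (\<lambda>x. u x A) = 0" for A
  proof -
    have "W1p_norm p G (\<lambda>x. u x A) = 0"
      using True sqrt_sum_power2_eq_0D[of "\<lambda>A. W1p_norm p G (\<lambda>x. u x A)" A]
      by (simp add: cl_W1p_norm_def)
    then have "Lp_norm p G (\<lambda>x. u x A) = 0" by (rule Lp_norm_eq_0_if_W1p_norm_eq_0[OF p])
    moreover have "in_Lp p G (\<lambda>x. u x A)" using u by (simp add: cl_W1p_def in_W1p_def)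
    ultimately have "AE y in lebesgue. y \<in> G \<longrightarrow> u y A = 0"
      using Lp_norm_eq_0_imp_AE p by blast
    moreover have "in_Lp (2 * p) G (\<lambda>x. u x A)"
      using E u by (simp add: embed_bounded_def cl_Lp_def)
    ultimately show ?thesis
      using Lp_norm_cong_AE[of "2 * p" G "\<lambda>x. u x A" "\<lambda>x. 0"] by (simp add: in_Lp_zero Lp_norm_zero)
  qed
  then show ?thesis using True by (simp add: cl_Lp_norm_def)
next
  case False
  then show ?thesis
    using E u cl_W1p_norm_nonneg[of p G u] unfolding embed_bounded_def embed_const_def
    by (intro le_Sup_ratio_mult[where F = "cl_Lp_norm (2 * p) G"]) auto
qed

section \<open>The iteration\<close>

lemma
  fixes u :: "real^'n::finite \<Rightarrow> 'n cl"
  assumes p: "p \<ge> 1" and E: "embed_bounded p G" and u: "cl_W1p p G u"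
  shows in_Lp_vec_abs2: "in_Lp p G (\<lambda>x. vec_abs2 (u x))"
    and Lp_norm_vec_abs2_le:
      "Lp_norm p G (\<lambda>x. vec_abs2 (u x)) \<le> (embed_const p G)\<^sup>2 * (cl_W1p_norm p G u)\<^sup>2"
proof -
  have u2: "in_Lp (2 * p) G (\<lambda>x. u x A)" for A
    using E u by (simp add: embed_bounded_def cl_Lp_def)
  have sq: "in_Lp p G (\<lambda>x. (u x {i})\<^sup>2)" for i
    using p by (intro in_Lp_power2 u2) simp
  show "in_Lp p G (\<lambda>x. vec_abs2 (u x))"
    unfolding vec_abs2_def by (intro in_Lp_sum[OF p] sq) simp
  have "Lp_norm p G (\<lambda>x. vec_abs2 (u x)) \<le> (\<Sum>i\<in>UNIV. Lp_norm p G (\<lambda>x. (u x {i})\<^sup>2))"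
    unfolding vec_abs2_def by (intro Lp_norm_sum_le[OF p] sq) simp
  also have "\<dots> = (\<Sum>i\<in>UNIV. (Lp_norm (2 * p) G (\<lambda>x. u x {i}))\<^sup>2)"
    using p by (simp add: Lp_norm_power2)
  also have "\<dots> \<le> (\<Sum>A\<in>UNIV. (Lp_norm (2 * p) G (\<lambda>x. u x A))\<^sup>2)"
    by (rule sum_singletons_le_sum) simp
  also have "\<dots> = (cl_Lp_norm (2 * p) G u)\<^sup>2"
    by (simp add: cl_Lp_norm_def sum_nonneg)
  also have "\<dots> \<le> (embed_const p G * cl_W1p_norm p G u)\<^sup>2"
    using p by (intro power_mono embed_const_bound[OF _ E u] cl_Lp_norm_nonneg) simp
  finally show "Lp_norm p G (\<lambda>x. vec_abs2 (u x)) \<le> (embed_const p G)\<^sup>2 * (cl_W1p_norm p G u)\<^sup>2"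
    by (simp add: power_mult_distrib)
qed

lemma
  fixes G :: "(real^'n::{finite,linorder}) set" and u :: "real^('n::{finite,linorder}) \<Rightarrow> 'n cl"
  assumes p: "p \<ge> 1" and G: "open G" "bounded G" "G \<noteq> {}" and V: "in_Lp p G V"
    and T: "teo_bounded p G" and E: "embed_bounded p G" and u: "cl_W1p p G u"
  defines "f \<equiv> \<lambda>x. cl_scalar (V x + vec_abs2 (u x))"
  shows cl_W1p_teodorescu_iterate: "cl_W1p p G (teodorescu G f)"
    and cl_W1p_norm_teodorescu_iterate_le:
      "cl_W1p_norm p G (teodorescu G f)
        \<le> teo_opnorm p G * Lp_norm p G V
          + teo_opnorm p G * (embed_const p G)\<^sup>2 * (cl_W1p_norm p G u)\<^sup>2"
proof -
  have g: "in_Lp p G (\<lambda>x. V x + vec_abs2 (u x))"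
    by (rule in_Lp_add[OF p V in_Lp_vec_abs2[OF p E u]])
  then have fL: "cl_Lp p G f" unfolding f_def by (rule cl_Lp_scalar)
  then show "cl_W1p p G (teodorescu G f)" using T by (simp add: teo_bounded_def)
  have "cl_W1p_norm p G (teodorescu G f) \<le> teo_opnorm p G * Lp_norm p G (\<lambda>x. V x + vec_abs2 (u x))"
    using teo_opnorm_bound[OF G _ T fL] p by (simp add: f_def cl_Lp_norm_scalar)
  also have "\<dots> \<le> teo_opnorm p G * (Lp_norm p G V + (embed_const p G)\<^sup>2 * (cl_W1p_norm p G u)\<^sup>2)"
    using Lp_norm_add_le[OF p V in_Lp_vec_abs2[OF p E u]] Lp_norm_vec_abs2_le[OF p E u]
      teo_opnorm_nonneg[OF G _ T] p
    by (intro mult_left_mono) auto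
  finally show "cl_W1p_norm p G (teodorescu G f)
      \<le> teo_opnorm p G * Lp_norm p G V + teo_opnorm p G * (embed_const p G)\<^sup>2 * (cl_W1p_norm p G u)\<^sup>2"
    by (simp add: algebra_simps)
qed

lemma quadratic_le_self_between_roots:
  fixes k1 k2 N X :: real
  assumes k2: "k2 > 0" and X: "\<bar>X - 1 / (2 * k2)\<bar> \<le> sqrt (1 / (4 * k2\<^sup>2) - k1 / k2 * N)"
  shows "k1 * N + k2 * X\<^sup>2 \<le> X"
proof -
  define R where "R = 1 / (4 * k2\<^sup>2) - k1 / k2 * N"
  have "\<bar>X - 1 / (2 * k2)\<bar> \<le> sqrt R" using X by (simp add: R_def)
  then have "(X - 1 / (2 * k2))\<^sup>2 \<le> R"
    by (metis abs_ge_zero abs_le_square_iff abs_of_nonneg order_trans real_sqrt_ge_0_iff real_sqrt_pow2)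
  moreover have "(X - 1 / (2 * k2))\<^sup>2 = (k2 * X\<^sup>2 - X) / k2 + 1 / (4 * k2\<^sup>2)"
    using k2 by (simp add: power2_diff power2_eq_square field_simps)
  ultimately have "(k2 * X\<^sup>2 - X) / k2 \<le> - (k1 * N / k2)" by (simp add: R_def)
  then show ?thesis using k2 by (simp add: divide_le_eq field_simps)
qed

lemma quadratic_recursion_bounded:
  fixes x :: "nat \<Rightarrow> real"
  assumes nonneg: "\<And>m. 0 \<le> x m" and k: "0 \<le> k"
    and rec: "\<And>m. x (Suc m) \<le> c + k * (x m)\<^sup>2"
    and start: "c + k * (x m0)\<^sup>2 \<le> x m0"
    and m: "m0 \<le> m"
  shows "x m \<le> x m0"
  using m
proof (induction m rule: nat_induct_at_least)
  case (Suc m)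
  then have "k * (x m)\<^sup>2 \<le> k * (x m0)\<^sup>2"
    using nonneg k by (intro mult_left_mono power_mono) auto
  then show ?case using rec[of m] start by linarith
qed simp

theorem lemma1:
  fixes G :: "(real^'n::{finite,linorder}) set"
    and p :: real and V :: "real^('n::{finite,linorder}) \<Rightarrow> real"
    and a :: "nat \<Rightarrow> real^('n::{finite,linorder}) \<Rightarrow> 'n cl"
    and k1 k2 C W :: real and m0 :: nat
  assumes n2: "CARD('n) \<ge> 2"
    and dom: "smooth_bounded_domain G"
    and p_rng: "(CARD('n) > 2 \<longrightarrow> real CARD('n) > p \<and> p \<ge> real CARD('n) / 2 \<and> real CARD('n) / 2 > 1)
               \<and> (CARD('n) = 2 \<longrightarrow> real CARD('n) > p \<and> p > 1)"
    and V: "in_Lp p G V"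
    and T_bdd: "teo_bounded p G" and k1: "k1 = teo_opnorm p G"
    and E_bdd: "embed_bounded p G" and C: "C = embed_const p G"
    and k2: "k2 = k1 * C\<^sup>2"
    and a0: "cl_W1p p G (a 0)" "vector_valued_on G (a 0)"
    and a_rec: "\<And>m. a (Suc m) = teodorescu G (\<lambda>x. cl_scalar (V x + vec_abs2 (a m x)))"
    and V_small: "Lp_norm p G V \<le> 1 / (4 * k1 * k2)"
    and W: "W = sqrt (1 / (4 * k2\<^sup>2) - (k1 / k2) * Lp_norm p G V)"
    and lo: "1 / (2 * k2) - W \<le> cl_W1p_norm p G (a m0)"
    and hi: "cl_W1p_norm p G (a m0) \<le> 1 / (2 * k2) + W"
  shows "cl_W1p_norm p G (a (Suc m0)) \<le> cl_W1p_norm p G (a m0)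
         \<and> (\<forall>m\<ge>m0. cl_W1p_norm p G (a m) \<le> cl_W1p_norm p G (a m0))"
proof -
  have p: "p \<ge> 1" using n2 p_rng by (cases "CARD('n) = 2") auto
  have G: "open G" "bounded G" "G \<noteq> {}" using dom by (auto simp: smooth_bounded_domain_def)
  define N where "N = Lp_norm p G V"
  define x where "x m = cl_W1p_norm p G (a m)" for m
  have W1: "cl_W1p p G (a m)" for m
    by (induction m) (simp_all add: a0(1) a_rec cl_W1p_teodorescu_iterate[OF p G V T_bdd E_bdd])
  have rec: "x (Suc m) \<le> k1 * N + k2 * (x m)\<^sup>2" for m
    using cl_W1p_norm_teodorescu_iterate_le[OF p G V T_bdd E_bdd W1[of m]]
    by (simp add: x_def N_def a_rec k1 k2 C mult.assoc)
  have k2_nonneg: "0 \<le> k2" using teo_opnorm_nonneg[OF G _ T_bdd] p by (simp add: k1 k2)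
  have start: "k1 * N + k2 * (x m0)\<^sup>2 \<le> x m0"
  proof (cases "k2 = 0")
    case True
    \<comment> \<open>Division by zero yields 0 here, so W = 0, x m0 = 0 and N = 0.\<close>
    then show ?thesis
      using V_small W hi cl_W1p_norm_nonneg[of p G "a m0"] Lp_norm_nonneg[of p G V]
      by (simp add: x_def N_def)
  next
    case False
    then show ?thesis
      using k2_nonneg lo hi W by (intro quadratic_le_self_between_roots) (auto simp: x_def N_def)
  qed
  have "x m \<le> x m0" if "m0 \<le> m" for m
    using cl_W1p_norm_nonneg k2_nonneg rec start that unfolding x_def
    by (rule quadratic_recursion_bounded)
  then show ?thesis by (simp add: x_def)
qed

end
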